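(* Let $(L_\bullet,\psi)$ be an $n$-expansion Lie algebra. Then for each $i\in\mathbb{Z}_{\geq1}$, $L_i$ is spanned by the elements $[\sigma_1,[\sigma_2,[\dots,[\sigma_{i-1},\sigma_i]\dots]]]$ with $\sigma_1,\dots,\sigma_i\in L_1$. Furthermore, $\psi$ restricts to an isomorphism $L_1 \to V_{[n]}$.
   Context: $V_{[n]} = \mathbb{F}_2^n$ with basis $e_1,\dots,e_n$, viewed as a graded Lie algebra concentrated in degree $1$ with zero bracket. A graded Lie algebra over $\mathbb{F}_2$ is a Lie algebra $L_\bullet=\bigoplus_{m\geq1}L_m$ over $\mathbb{F}_2$ with $[L_h,L_k]\subseteq L_{h+k}$. An $n$-expansion Lie algebra is a pair $(L_\bullet,\psi)$ with: (1) $L_\bullet$ a graded Lie algebra over $\mathbb{F}_2$ and $\psi:L_\bullet\to V_{[n]}$ a surjective graded Lie algebra homomorphism; (2) $\ker\psi$ an abelian subalgebra; (3) $[L_\bullet,L_\bullet]=\ker\psi$; (4) for each $i\geq4$ and $\sigma_1,\dots,\sigma_i\in L_1$, the element $[\sigma_1,[\sigma_2,[\dots,[\sigma_{i-1},\sigma_i]\dots]]]$ does not depend on the order of $\sigma_1,\dots,\sigma_{i-2}$ and vanishes whenever $\sigma_s=\sigma_t$ for distinct $s,t\in\{1,\dots,i-2\}$; moreover if $\tau_1,\tau_2\in L_1$ and $\psi(\tau_1)\in\{e_1,\dots,e_n\}$ then $[\tau_1,[\tau_1,\tau_2]]=0$. *)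

theory Defs
  imports Main "HOL-Library.Z2" "HOL-Library.Multiset"
begin

text \<open>A vector space over F2 is an abelian group in which x + x = 0
  (scalar multiplication by 0 and 1 is then determined).\<close>

definition char2 :: "('a::ab_group_add) itself \<Rightarrow> bool" where
  "char2 _ \<longleftrightarrow> (\<forall>x::'a. x + x = 0)"

text \<open>F2-linear span: closure under 0 and addition (negation is the identity).\<close>
inductive_set f2span :: "('a::ab_group_add) set \<Rightarrow> 'a set" for S where
  zero: "0 \<in> f2span S"
| gen: "s \<in> S \<Longrightarrow> s \<in> f2span S"
| add: "a \<in> f2span S \<Longrightarrow> b \<in> f2span S \<Longrightarrow> a + b \<in> f2span S"

definition is_f2_subspace :: "('a::ab_group_add) set \<Rightarrow> bool" where
  "is_f2_subspace W \<longleftrightarrow> 0 \<in> W \<and> (\<forall>x\<in>W. \<forall>y\<in>W. x + y \<in> W)"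

definition lie_algebra_F2 :: "('a::ab_group_add \<Rightarrow> 'a \<Rightarrow> 'a) \<Rightarrow> bool" where
  "lie_algebra_F2 br \<longleftrightarrow> char2 TYPE('a) \<and>
     (\<forall>x y z. br (x + y) z = br x z + br y z) \<and>
     (\<forall>x y z. br x (y + z) = br x y + br x z) \<and>
     (\<forall>x. br x x = 0) \<and>
     (\<forall>x y z. br x (br y z) + br y (br z x) + br z (br x y) = 0)"

definition graded_lie_algebra_F2 ::
  "('a::ab_group_add \<Rightarrow> 'a \<Rightarrow> 'a) \<Rightarrow> (nat \<Rightarrow> 'a set) \<Rightarrow> bool" where
  "graded_lie_algebra_F2 br Lg \<longleftrightarrow> lie_algebra_F2 br \<and>
     (\<forall>m\<ge>1. is_f2_subspace (Lg m)) \<and>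
     (\<forall>x. \<exists>!c::nat \<Rightarrow> 'a. c 0 = 0 \<and> (\<forall>m\<ge>1. c m \<in> Lg m) \<and>
            finite {m. c m \<noteq> 0} \<and> x = (\<Sum>m\<in>{m. c m \<noteq> 0}. c m)) \<and>
     (\<forall>h\<ge>1. \<forall>k\<ge>1. \<forall>x\<in>Lg h. \<forall>y\<in>Lg k. br x y \<in> Lg (h + k))"

text \<open>V_[n] = F2^n, realised as functions nat => bit supported in {1..n},
  with pointwise addition; basis vectors e_i.\<close>
definition Vn :: "nat \<Rightarrow> (nat \<Rightarrow> bit) set" where
  "Vn n = {v. \<forall>i. v i \<noteq> 0 \<longrightarrow> i \<in> {1..n}}"

definition vadd :: "(nat \<Rightarrow> bit) \<Rightarrow> (nat \<Rightarrow> bit) \<Rightarrow> nat \<Rightarrow> bit" where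
  "vadd v w = (\<lambda>i. v i + w i)"

definition vzero :: "nat \<Rightarrow> bit" where
  "vzero = (\<lambda>i. 0)"

definition basis_e :: "nat \<Rightarrow> nat \<Rightarrow> bit" where
  "basis_e i = (\<lambda>j. if j = i then 1 else 0)"

definition Vdeg :: "nat \<Rightarrow> nat \<Rightarrow> (nat \<Rightarrow> bit) set" where
  "Vdeg n m = (if m = 1 then Vn n else {vzero})"

text \<open>Surjective graded Lie algebra homomorphism L -> V_[n] (bracket of V is zero).\<close>
definition surj_graded_hom_to_V ::
  "nat \<Rightarrow> ('a::ab_group_add \<Rightarrow> 'a \<Rightarrow> 'a) \<Rightarrow> (nat \<Rightarrow> 'a set) \<Rightarrow> ('a \<Rightarrow> nat \<Rightarrow> bit) \<Rightarrow> bool" where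
  "surj_graded_hom_to_V n br Lg \<psi> \<longleftrightarrow>
     (\<forall>x. \<psi> x \<in> Vn n) \<and>
     (\<forall>x y. \<psi> (x + y) = vadd (\<psi> x) (\<psi> y)) \<and>
     (\<forall>x y. \<psi> (br x y) = vzero) \<and>
     (\<forall>m\<ge>1. \<psi> ` Lg m \<subseteq> Vdeg n m) \<and>
     \<psi> ` UNIV = Vn n"

definition kerV :: "('a \<Rightarrow> nat \<Rightarrow> bit) \<Rightarrow> 'a set" where
  "kerV \<psi> = {x. \<psi> x = vzero}"

fun rbr :: "('a::zero \<Rightarrow> 'a \<Rightarrow> 'a) \<Rightarrow> 'a list \<Rightarrow> 'a" where
  "rbr br [] = 0"
| "rbr br [x] = x"
| "rbr br (x # xs) = br x (rbr br xs)"

definition n_expansion_lie_algebra ::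
  "nat \<Rightarrow> ('a::ab_group_add \<Rightarrow> 'a \<Rightarrow> 'a) \<Rightarrow> (nat \<Rightarrow> 'a set) \<Rightarrow> ('a \<Rightarrow> nat \<Rightarrow> bit) \<Rightarrow> bool" where
  "n_expansion_lie_algebra n br Lg \<psi> \<longleftrightarrow>
     graded_lie_algebra_F2 br Lg \<and>
     surj_graded_hom_to_V n br Lg \<psi> \<and>
     (\<forall>x\<in>kerV \<psi>. \<forall>y\<in>kerV \<psi>. br x y = 0) \<and>
     f2span {br x y | x y. True} = kerV \<psi> \<and>
     (\<forall>xs ys a b. length xs \<ge> 2 \<and> set xs \<subseteq> Lg 1 \<and> a \<in> Lg 1 \<and> b \<in> Lg 1 \<and>
          mset ys = mset xs \<longrightarrow> rbr br (ys @ [a, b]) = rbr br (xs @ [a, b])) \<and>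
     (\<forall>xs a b. length xs \<ge> 2 \<and> set xs \<subseteq> Lg 1 \<and> a \<in> Lg 1 \<and> b \<in> Lg 1 \<and>
          \<not> distinct xs \<longrightarrow> rbr br (xs @ [a, b]) = 0) \<and>
     (\<forall>t1\<in>Lg 1. \<forall>t2\<in>Lg 1. \<psi> t1 \<in> basis_e ` {1..n} \<longrightarrow> br t1 (br t1 t2) = 0)"

end

theory Submission
  imports Defs
begin

text \<open>Every element of L_m with m \<ge> 2 lies in ker \<psi>, the span of all brackets [a, b].
  Expanding a and b into homogeneous components, the degree-m component of an element of this
  span is a sum of brackets [x, y] with x, y homogeneous of degrees h + k = m. By induction on m,
  x and y are sums of right-normed brackets of degree-1 elements, and the Jacobi identity
  [[s, r], b] = [s, [r, b]] + [r, [b, s]] turns [x, y] into such a sum as well. For m = 1 there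
  are no such brackets, so ker \<psi> meets L_1 only in 0; and every x differs from its degree-1
  component by an element of ker \<psi>, so \<psi> is already onto on L_1. Only conditions (1) and (3)
  of an n-expansion Lie algebra are needed.\<close>

lemma f2span_minimal:
  assumes "is_f2_subspace W" "S \<subseteq> W"
  shows "f2span S \<subseteq> W"
proof
  fix x assume "x \<in> f2span S"
  then show "x \<in> W"
    by induction (use assms in \<open>auto simp: is_f2_subspace_def\<close>)
qed

lemma is_f2_subspace_f2span: "is_f2_subspace (f2span S)"
  by (simp add: is_f2_subspace_def f2span.zero f2span.add)

lemma f2span_empty: "f2span {} = {0}"
  using f2span_minimal[of "{0}" "{}"] f2span.zero by (auto simp: is_f2_subspace_def)

lemma is_f2_subspace_vimage:
  assumes "is_f2_subspace W" "f 0 = 0" "\<And>x y. f (x + y) = f x + f y"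
  shows "is_f2_subspace (f -` W)"
  using assms by (simp add: is_f2_subspace_def)

lemma is_f2_subspace_sum:
  assumes "is_f2_subspace W" "\<And>t. t \<in> T \<Longrightarrow> f t \<in> W"
  shows "sum f T \<in> W"
  using assms(2)
  by (induction T rule: infinite_finite_induct)
    (use assms(1) in \<open>auto simp: is_f2_subspace_def\<close>)

lemma vadd_eq_vzero_iff: "vadd v w = vzero \<longleftrightarrow> v = w"
proof -
  have "(a::bit) + b = 0 \<longleftrightarrow> a = b" for a b
    by auto
  then show ?thesis
    by (simp add: vadd_def vzero_def fun_eq_iff)
qed

lemma rbr_Cons: "ys \<noteq> [] \<Longrightarrow> rbr br (x # ys) = br x (rbr br ys)"
  by (cases ys) auto

locale f2_lie_algebra =
  fixes br :: "'a::ab_group_add \<Rightarrow> 'a \<Rightarrow> 'a"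
  assumes lie_algebra: "lie_algebra_F2 br"
begin

lemma add_self: "x + x = (0::'a)"
  using lie_algebra by (simp add: lie_algebra_F2_def char2_def)

lemma add_eq_0_iff_eq: "x + y = (0::'a) \<longleftrightarrow> x = y"
  by (metis add_self add_left_imp_eq)

lemma bracket_add_left: "br (x + y) z = br x z + br y z"
  and bracket_add_right: "br x (y + z) = br x y + br x z"
  and bracket_self: "br x x = 0"
  and jacobi: "br x (br y z) + br y (br z x) + br z (br x y) = 0"
  using lie_algebra by (simp_all add: lie_algebra_F2_def)

lemma bracket_zero_left [simp]: "br 0 y = 0"
  using bracket_add_left[of 0 0 y] by simp

lemma bracket_zero_right [simp]: "br y 0 = 0"
  using bracket_add_right[of y 0 0] by simp

lemma bracket_commute: "br x y = br y x"
proof -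
  have "0 = br (x + y) (x + y)" by (simp add: bracket_self)
  also have "\<dots> = br x y + br y x"
    unfolding bracket_add_left bracket_add_right by (simp add: bracket_self)
  finally show ?thesis by (metis add_eq_0_iff_eq)
qed

lemma bracket_bracket_left: "br (br x y) z = br x (br y z) + br y (br z x)"
  using jacobi[of x y z] bracket_commute[of z "br x y"]
  by (metis add_eq_0_iff_eq)

lemma bracket_sum_left: "br (sum f T) y = (\<Sum>t\<in>T. br (f t) y)"
  using sum_comp_morphism[of "\<lambda>x. br x y" f T] by (simp add: bracket_add_left o_def)

lemma bracket_sum_right: "br y (sum f T) = (\<Sum>t\<in>T. br y (f t))"
  using sum_comp_morphism[of "br y" f T] by (simp add: bracket_add_right o_def)

definition derived_span :: "'a set" where
  "derived_span = f2span {br x y | x y. True}"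

lemma is_f2_subspace_derived_span: "is_f2_subspace derived_span"
  by (simp add: derived_span_def is_f2_subspace_f2span)

end

locale graded_f2_lie_algebra =
  fixes br :: "'a::ab_group_add \<Rightarrow> 'a \<Rightarrow> 'a" and Lg :: "nat \<Rightarrow> 'a set"
  assumes graded: "graded_lie_algebra_F2 br Lg"
begin

sublocale f2_lie_algebra br
  using graded by unfold_locales (simp add: graded_lie_algebra_F2_def)

lemma is_f2_subspace_degree: "1 \<le> m \<Longrightarrow> is_f2_subspace (Lg m)"
  using graded by (simp add: graded_lie_algebra_F2_def)

lemma bracket_in_degree:
  "1 \<le> h \<Longrightarrow> 1 \<le> k \<Longrightarrow> x \<in> Lg h \<Longrightarrow> y \<in> Lg k \<Longrightarrow> br x y \<in> Lg (h + k)"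
  using graded by (simp add: graded_lie_algebra_F2_def)

definition homogeneous_decomposition :: "'a \<Rightarrow> (nat \<Rightarrow> 'a) \<Rightarrow> bool" where
  "homogeneous_decomposition x c \<longleftrightarrow> c 0 = 0 \<and> (\<forall>m\<ge>1. c m \<in> Lg m) \<and>
     finite {m. c m \<noteq> 0} \<and> x = (\<Sum>m\<in>{m. c m \<noteq> 0}. c m)"

definition component :: "'a \<Rightarrow> nat \<Rightarrow> 'a" where
  "component x = (THE c. homogeneous_decomposition x c)"

lemma ex1_homogeneous_decomposition: "\<exists>!c. homogeneous_decomposition x c"
  using graded unfolding graded_lie_algebra_F2_def homogeneous_decomposition_def by simp

lemma homogeneous_decomposition_component: "homogeneous_decomposition x (component x)"
  unfolding component_def by (rule theI'[OF ex1_homogeneous_decomposition])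

lemma component_eqI: "homogeneous_decomposition x c \<Longrightarrow> component x = c"
  unfolding component_def by (rule the1_equality[OF ex1_homogeneous_decomposition])

lemma homogeneous_decompositionI:
  assumes "c 0 = 0" "\<And>m. 1 \<le> m \<Longrightarrow> c m \<in> Lg m" "finite S" "{m. c m \<noteq> 0} \<subseteq> S"
    and "x = sum c S"
  shows "homogeneous_decomposition x c"
proof -
  have "finite {m. c m \<noteq> 0}"
    using assms(3,4) by (rule finite_subset[rotated])
  moreover have "sum c S = (\<Sum>m\<in>{m. c m \<noteq> 0}. c m)"
    using assms(3,4) by (rule sum.mono_neutral_right) auto
  ultimately show ?thesis
    using assms(1,2,5) unfolding homogeneous_decomposition_def by simp
qed

lemma component_degree_0 [simp]: "component x 0 = 0"
  and component_in_degree: "1 \<le> m \<Longrightarrow> component x m \<in> Lg m"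
  and finite_component_support: "finite {m. component x m \<noteq> 0}"
  using homogeneous_decomposition_component[of x]
  by (simp_all add: homogeneous_decomposition_def)

lemma sum_components:
  assumes "finite S" "{m. component x m \<noteq> 0} \<subseteq> S"
  shows "x = sum (component x) S"
proof -
  have "x = (\<Sum>m\<in>{m. component x m \<noteq> 0}. component x m)"
    using homogeneous_decomposition_component[of x] by (simp add: homogeneous_decomposition_def)
  also have "\<dots> = sum (component x) S"
    using assms by (rule sum.mono_neutral_left) auto
  finally show ?thesis .
qed

lemma component_homogeneous:
  assumes "1 \<le> m" "x \<in> Lg m"
  shows "component x k = (if k = m then x else 0)"
proof -
  have "homogeneous_decomposition x (\<lambda>k. if k = m then x else 0)"
    using assms
    by (intro homogeneous_decompositionI[where S = "{m}"])
      (auto simp: is_f2_subspace_degree[unfolded is_f2_subspace_def])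
  then show ?thesis by (simp add: component_eqI)
qed

lemma component_add: "component (x + y) m = component x m + component y m"
proof -
  let ?S = "{m. component x m \<noteq> 0} \<union> {m. component y m \<noteq> 0}"
  have "homogeneous_decomposition (x + y) (\<lambda>m. component x m + component y m)"
  proof (rule homogeneous_decompositionI[where S = ?S])
    show "component x m + component y m \<in> Lg m" if "1 \<le> m" for m
      using that is_f2_subspace_degree component_in_degree by (simp add: is_f2_subspace_def)
    show "x + y = (\<Sum>m\<in>?S. component x m + component y m)"
      using sum_components[of ?S x] sum_components[of ?S y] finite_component_support
      by (simp add: sum.distrib)
  qed (auto simp: finite_component_support)
  then show ?thesis by (simp add: component_eqI)
qed

lemma component_zero [simp]: "component 0 m = 0"
  using component_add[of 0 0 m] by simp

definition homogeneous_brackets :: "nat \<Rightarrow> 'a set" where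
  "homogeneous_brackets m =
     {br x y | x y h k. 1 \<le> h \<and> 1 \<le> k \<and> h + k = m \<and> x \<in> Lg h \<and> y \<in> Lg k}"

lemma homogeneous_brackets_1: "homogeneous_brackets 1 = {}"
  by (auto simp: homogeneous_brackets_def)

lemma component_bracket_components:
  "component (br (component a h) (component b k)) m \<in> f2span (homogeneous_brackets m)"
proof (cases "h = 0 \<or> k = 0")
  case True
  then show ?thesis by (auto simp: f2span.zero)
next
  case False
  then have "1 \<le> h" "1 \<le> k" by simp_all
  then have "component a h \<in> Lg h" "component b k \<in> Lg k"
    by (simp_all add: component_in_degree)
  with \<open>1 \<le> h\<close> \<open>1 \<le> k\<close>
  have generator: "br (component a h) (component b k) \<in> homogeneous_brackets (h + k)"
    and "br (component a h) (component b k) \<in> Lg (h + k)"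
    by (auto simp: homogeneous_brackets_def bracket_in_degree)
  with \<open>1 \<le> h\<close> have "component (br (component a h) (component b k)) m =
      (if m = h + k then br (component a h) (component b k) else 0)"
    by (simp add: component_homogeneous)
  with generator show ?thesis
    by (auto intro: f2span.gen f2span.zero)
qed

lemma component_derived_span:
  assumes "z \<in> derived_span"
  shows "component z m \<in> f2span (homogeneous_brackets m)"
proof -
  let ?W = "(\<lambda>z. component z m) -` f2span (homogeneous_brackets m)"
  have W: "is_f2_subspace ?W"
    by (rule is_f2_subspace_vimage) (simp_all add: is_f2_subspace_f2span component_add)
  have "br a b \<in> ?W" for a b
  proof -
    let ?Sa = "{m. component a m \<noteq> 0}" and ?Sb = "{m. component b m \<noteq> 0}"
    have "br a b = br (sum (component a) ?Sa) (sum (component b) ?Sb)"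
      by (intro arg_cong2[where f = br] sum_components finite_component_support) simp_all
    also have "\<dots> = (\<Sum>h\<in>?Sa. \<Sum>k\<in>?Sb. br (component a h) (component b k))"
      by (subst bracket_sum_left) (simp add: bracket_sum_right)
    also have "\<dots> \<in> ?W"
      by (intro is_f2_subspace_sum[OF W]) (simp add: component_bracket_components)
    finally show ?thesis .
  qed
  then have "derived_span \<subseteq> ?W"
    unfolding derived_span_def by (intro f2span_minimal[OF W]) blast
  with assms show ?thesis by blast
qed

lemma derived_span_Int_degree_1:
  assumes "z \<in> derived_span" "z \<in> Lg 1"
  shows "z = 0"
proof -
  have "component z 1 \<in> f2span {}"
    using component_derived_span[OF assms(1), of 1] by (metis homogeneous_brackets_1)
  then show ?thesis
    using component_homogeneous[OF _ assms(2), of 1] by (simp add: f2span_empty)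
qed

text \<open>In characteristic 2, x + component x 1 is x minus its degree-1 component.\<close>

lemma add_component_1_in_derived_span:
  assumes generated: "\<And>m. 2 \<le> m \<Longrightarrow> Lg m \<subseteq> derived_span"
  shows "x + component x 1 \<in> derived_span"
proof -
  let ?rest = "sum (component x) ({m. component x m \<noteq> 0} - {1})"
  have "x = sum (component x) (insert 1 {m. component x m \<noteq> 0})"
    by (rule sum_components) (auto simp: finite_component_support)
  also have "\<dots> = component x 1 + ?rest"
    by (simp add: sum.insert_remove finite_component_support)
  finally have "x + component x 1 = ?rest"
    by (metis add.commute add.left_commute add_self add_0_right)
  also have "\<dots> \<in> derived_span"
  proof (rule is_f2_subspace_sum[OF is_f2_subspace_derived_span])
    fix m assume "m \<in> {m. component x m \<noteq> 0} - {1}"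
    then consider "m = 0" | "2 \<le> m" by force
    then show "component x m \<in> derived_span"
    proof cases
      case 1
      then show ?thesis
        using is_f2_subspace_derived_span by (simp add: is_f2_subspace_def)
    next
      case 2
      then show ?thesis
        using generated component_in_degree[of m x] by auto
    qed
  qed
  finally show ?thesis .
qed

definition right_normed_span :: "nat \<Rightarrow> 'a set" where
  "right_normed_span m = f2span {rbr br xs | xs. length xs = m \<and> set xs \<subseteq> Lg 1}"

lemma rbr_in_degree: "xs \<noteq> [] \<Longrightarrow> set xs \<subseteq> Lg 1 \<Longrightarrow> rbr br xs \<in> Lg (length xs)"
proof (induction xs rule: induct_list012)
  case (3 s y ys)
  then have "s \<in> Lg 1" "rbr br (y # ys) \<in> Lg (length (y # ys))" by simp_all
  then show ?case
    using bracket_in_degree[of 1 "length (y # ys)"] by simp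
qed simp_all

lemma right_normed_span_subset: "1 \<le> m \<Longrightarrow> right_normed_span m \<subseteq> Lg m"
  unfolding right_normed_span_def
  by (rule f2span_minimal) (auto simp: is_f2_subspace_degree intro!: rbr_in_degree)

lemma bracket_degree_1_right_normed_span:
  assumes "s \<in> Lg 1" "1 \<le> k" "r \<in> right_normed_span k"
  shows "br s r \<in> right_normed_span (Suc k)"
proof -
  let ?W = "br s -` right_normed_span (Suc k)"
  have W: "is_f2_subspace ?W"
    unfolding right_normed_span_def
    by (rule is_f2_subspace_vimage) (simp_all add: is_f2_subspace_f2span bracket_add_right)
  have "br s (rbr br ys) \<in> right_normed_span (Suc k)"
    if "length ys = k" "set ys \<subseteq> Lg 1" for ys
  proof -
    have "ys \<noteq> []"
      using that assms(2) by auto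
    then have "br s (rbr br ys) = rbr br (s # ys)"
      by (simp add: rbr_Cons)
    then show ?thesis
      using that assms(1) unfolding right_normed_span_def
      by (intro f2span.gen CollectI exI[of _ "s # ys"]) auto
  qed
  then have "right_normed_span k \<subseteq> ?W"
    unfolding right_normed_span_def
    by (intro f2span_minimal[OF W[unfolded right_normed_span_def]]) auto
  with assms(3) show ?thesis by blast
qed

lemma bracket_rbr_right_normed_span:
  "xs \<noteq> [] \<Longrightarrow> set xs \<subseteq> Lg 1 \<Longrightarrow> 1 \<le> k \<Longrightarrow> b \<in> right_normed_span k \<Longrightarrow>
    br (rbr br xs) b \<in> right_normed_span (length xs + k)"
proof (induction xs arbitrary: k b rule: induct_list012)
  case (2 s)
  then show ?case by (simp add: bracket_degree_1_right_normed_span)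
next
  case (3 s y ys)
  let ?r = "rbr br (y # ys)"
  have "br ?r b \<in> right_normed_span (length (y # ys) + k)"
    using "3.IH"(2) "3.prems" by simp
  then have "br s (br ?r b) \<in> right_normed_span (length (s # y # ys) + k)"
    using "3.prems" bracket_degree_1_right_normed_span by simp
  moreover have "br b s \<in> right_normed_span (Suc k)"
    using "3.prems" bracket_degree_1_right_normed_span[of s k b] bracket_commute[of b s] by simp
  then have "br ?r (br b s) \<in> right_normed_span (length (s # y # ys) + k)"
    using "3.IH"(2)[of "Suc k" "br b s"] "3.prems" by simp
  ultimately show ?case
    by (simp add: bracket_bracket_left right_normed_span_def f2span.add)
qed simp

lemma bracket_right_normed_span:
  assumes "1 \<le> h" "1 \<le> k" "a \<in> right_normed_span h" "b \<in> right_normed_span k"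
  shows "br a b \<in> right_normed_span (h + k)"
proof -
  let ?W = "(\<lambda>a. br a b) -` right_normed_span (h + k)"
  have W: "is_f2_subspace ?W"
    unfolding right_normed_span_def
    by (rule is_f2_subspace_vimage) (simp_all add: is_f2_subspace_f2span bracket_add_left)
  have "br (rbr br xs) b \<in> right_normed_span (h + k)"
    if "length xs = h" "set xs \<subseteq> Lg 1" for xs
  proof -
    have "xs \<noteq> []" using that assms(1) by auto
    then show ?thesis
      using bracket_rbr_right_normed_span[of xs k b] that assms(2,4) by simp
  qed
  then have "right_normed_span h \<subseteq> ?W"
    unfolding right_normed_span_def
    by (intro f2span_minimal[OF W[unfolded right_normed_span_def]]) auto
  with assms(3) show ?thesis by blast
qed

lemma degree_1_subset_right_normed_span: "Lg 1 \<subseteq> right_normed_span 1"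
proof
  fix x assume "x \<in> Lg 1"
  then show "x \<in> right_normed_span 1"
    unfolding right_normed_span_def by (intro f2span.gen CollectI exI[of _ "[x]"]) auto
qed

lemma homogeneous_brackets_subset_right_normed_span:
  assumes "\<And>h. 1 \<le> h \<Longrightarrow> h < m \<Longrightarrow> Lg h \<subseteq> right_normed_span h"
  shows "homogeneous_brackets m \<subseteq> right_normed_span m"
proof
  fix z assume "z \<in> homogeneous_brackets m"
  then obtain x y h k where z: "z = br x y" "1 \<le> h" "1 \<le> k" "h + k = m"
    and "x \<in> Lg h" "y \<in> Lg k"
    unfolding homogeneous_brackets_def by blast
  then have "x \<in> right_normed_span h" "y \<in> right_normed_span k"
    using assms[of h] assms[of k] by auto
  with z show "z \<in> right_normed_span m"
    using bracket_right_normed_span by blast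
qed

lemma degree_eq_right_normed_span:
  assumes generated: "\<And>m. 2 \<le> m \<Longrightarrow> Lg m \<subseteq> derived_span" and "1 \<le> m"
  shows "Lg m = right_normed_span m"
proof
  show "right_normed_span m \<subseteq> Lg m"
    using assms(2) by (rule right_normed_span_subset)
  show "Lg m \<subseteq> right_normed_span m"
    using assms(2)
  proof (induction m rule: less_induct)
    case (less m)
    show ?case
    proof (cases "m = 1")
      case True
      then show ?thesis using degree_1_subset_right_normed_span by simp
    next
      case False
      have "f2span (homogeneous_brackets m) \<subseteq> right_normed_span m"
        using homogeneous_brackets_subset_right_normed_span[OF less.IH]
        by (intro f2span_minimal) (simp_all add: right_normed_span_def is_f2_subspace_f2span)
      moreover have "Lg m \<subseteq> derived_span"
        using False less.prems generated by simp
      ultimately show ?thesis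
        using component_derived_span component_homogeneous[OF less.prems] by fastforce
    qed
  qed
qed

lemma higher_degree_subset_derived_span:
  assumes hom: "surj_graded_hom_to_V n br Lg \<psi>" and kernel: "kerV \<psi> = derived_span"
    and "2 \<le> m"
  shows "Lg m \<subseteq> derived_span"
proof
  fix x assume "x \<in> Lg m"
  moreover have "\<psi> ` Lg m \<subseteq> Vdeg n m"
    using hom \<open>2 \<le> m\<close> by (simp add: surj_graded_hom_to_V_def)
  ultimately have "\<psi> x = vzero"
    using \<open>2 \<le> m\<close> by (auto simp: Vdeg_def)
  with kernel show "x \<in> derived_span"
    by (auto simp: kerV_def)
qed

lemma bij_betw_degree_1:
  assumes hom: "surj_graded_hom_to_V n br Lg \<psi>" and kernel: "kerV \<psi> = derived_span"
  shows "bij_betw \<psi> (Lg 1) (Vn n)"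
proof -
  have same_image: "\<psi> x = \<psi> y \<longleftrightarrow> x + y \<in> derived_span" for x y
    using hom unfolding kernel[symmetric]
    by (simp add: surj_graded_hom_to_V_def kerV_def vadd_eq_vzero_iff)
  have "inj_on \<psi> (Lg 1)"
  proof (rule inj_onI)
    fix x y assume "x \<in> Lg 1" "y \<in> Lg 1" "\<psi> x = \<psi> y"
    then have "x + y = 0"
      using same_image derived_span_Int_degree_1 is_f2_subspace_degree[of 1]
      by (simp add: is_f2_subspace_def)
    then show "x = y" by (simp add: add_eq_0_iff_eq)
  qed
  moreover have "\<psi> ` Lg 1 = Vn n"
  proof
    show "\<psi> ` Lg 1 \<subseteq> Vn n"
      using hom by (auto simp: surj_graded_hom_to_V_def)
    have "\<psi> x \<in> \<psi> ` Lg 1" for x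
    proof -
      have "\<psi> x = \<psi> (component x 1)"
        using same_image add_component_1_in_derived_span
          higher_degree_subset_derived_span[OF hom kernel] by blast
      then show ?thesis
        using component_in_degree[of 1 x] by simp
    qed
    moreover have "Vn n = range \<psi>"
      using hom by (simp add: surj_graded_hom_to_V_def)
    ultimately show "Vn n \<subseteq> \<psi> ` Lg 1"
      by (simp add: image_subset_iff)
  qed
  ultimately show ?thesis
    by (simp add: bij_betw_def)
qed

end

theorem proposition3p4:
  fixes n :: nat and br :: "'a::ab_group_add \<Rightarrow> 'a \<Rightarrow> 'a"
    and Lg :: "nat \<Rightarrow> 'a set" and \<psi> :: "'a \<Rightarrow> nat \<Rightarrow> bit"
  assumes "n_expansion_lie_algebra n br Lg \<psi>"
  shows "(\<forall>i\<ge>1. Lg i = f2span {rbr br xs | xs. length xs = i \<and> set xs \<subseteq> Lg 1})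
         \<and> bij_betw \<psi> (Lg 1) (Vn n)"
proof -
  interpret graded_f2_lie_algebra br Lg
    using assms by unfold_locales (simp add: n_expansion_lie_algebra_def)
  have hom: "surj_graded_hom_to_V n br Lg \<psi>" and kernel: "kerV \<psi> = derived_span"
    using assms by (simp_all add: n_expansion_lie_algebra_def derived_span_def)
  have "Lg i = right_normed_span i" if "1 \<le> i" for i
    using degree_eq_right_normed_span higher_degree_subset_derived_span[OF hom kernel] that
    by blast
  then show ?thesis
    using bij_betw_degree_1[OF hom kernel] unfolding right_normed_span_def by blast
qed

end
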